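(* For all $1\leq n<\omega$, $\Theta_n\geq\aleph_n$.
   Context: For $1\leq n<\omega$, $\Theta_n$ is the least cardinal $\theta$ such that for every function $f:\theta^n\to\omega$ there is a sequence $\langle A_i\mid i<n\rangle$ of infinite subsets of $\theta$ such that $f\restriction\prod_{i<n}A_i$ is constant. *)

theory Defs
  imports Main "HOL-Library.FuncSet" "HOL-Library.Countable_Set"
begin

text \<open>card_le_aleph k X  means  |X| \<le> aleph_k.
  aleph_0-bounded = countable; |X| \<le> aleph_(k+1) iff X carries a well-order
  all of whose proper initial segments have size \<le> aleph_k.\<close>
fun card_le_aleph :: "nat \<Rightarrow> 'a set \<Rightarrow> bool" where
  "card_le_aleph 0 X = countable X"
| "card_le_aleph (Suc k) X =
     (\<exists>R. Well_order R \<and> Field R = X \<and> (\<forall>x\<in>X. card_le_aleph k (underS R x)))"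

fun card_lt_aleph :: "nat \<Rightarrow> 'a set \<Rightarrow> bool" where
  "card_lt_aleph 0 X = finite X"
| "card_lt_aleph (Suc k) X = card_le_aleph k X"

text \<open>Theta_prop n X: for every f : X^n \<rightarrow> omega there are infinite A_0..A_(n-1) \<subseteq> X
  with f constant on their product (tuples are functions on {..<n}).\<close>
definition Theta_prop :: "nat \<Rightarrow> 'a set \<Rightarrow> bool" where
  "Theta_prop n X \<longleftrightarrow>
     (\<forall>f :: (nat \<Rightarrow> 'a) \<Rightarrow> nat. \<exists>A :: nat \<Rightarrow> 'a set.
        (\<forall>i<n. A i \<subseteq> X \<and> infinite (A i)) \<and>
        (\<exists>c. \<forall>x\<in>Pi\<^sub>E {..<n} A. f x = c))"

end

theory Submission
  imports Defs
begin

text \<open>By induction on k, every set X of size at most aleph_k has a colouring of its (k+1)-tuples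
  by natural numbers that is constant on no product of k+1 infinite subsets of X. For k = 0,
  colour a tuple by the image of its first coordinate under an injection of X into the naturals.
  For the step, well-order X so that all proper initial segments have size at most aleph_k and
  fix such colourings g a of the segment below each a. Colour a (k+2)-tuple by the pair of the
  position m of its largest coordinate a and the g a-colour of its remaining coordinates. On a
  homogeneous product m is constant; fixing a in the m-th factor, maximality puts all other
  factors, with a removed, below a, and g a is constant on their product.\<close>

definition homogeneous_box :: "nat \<Rightarrow> 'a set \<Rightarrow> ((nat \<Rightarrow> 'a) \<Rightarrow> nat) \<Rightarrow> bool" where
  "homogeneous_box n X f \<longleftrightarrow>
     (\<exists>A. (\<forall>i<n. A i \<subseteq> X \<and> infinite (A i)) \<and> (\<exists>c. \<forall>x\<in>Pi\<^sub>E {..<n} A. f x = c))"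

lemma Theta_prop_iff_homogeneous_box: "Theta_prop n X \<longleftrightarrow> (\<forall>f. homogeneous_box n X f)"
  unfolding Theta_prop_def homogeneous_box_def ..

lemma countable_not_homogeneous_box:
  assumes "countable X"
  shows "\<not> homogeneous_box (Suc 0) X (\<lambda>x. to_nat_on X (x 0))"
proof
  assume "homogeneous_box (Suc 0) X (\<lambda>x. to_nat_on X (x 0))"
  then obtain A c where A: "A 0 \<subseteq> X" "infinite (A 0)"
    and c: "\<forall>x\<in>Pi\<^sub>E {..<Suc 0} A. to_nat_on X (x 0) = c"
    unfolding homogeneous_box_def by auto
  have const: "to_nat_on X a = c" if "a \<in> A 0" for a
    using c[rule_format, of "restrict (\<lambda>_. a) {..<Suc 0}"] that by auto
  obtain a where a: "a \<in> A 0" using A(2) by (metis ex_in_conv finite.emptyI)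
  have "A 0 \<subseteq> {a}"
  proof
    fix b assume "b \<in> A 0"
    then have "to_nat_on X b = to_nat_on X a" using const a by simp
    then show "b \<in> {a}"
      using inj_on_to_nat_on[OF assms] A(1) a \<open>b \<in> A 0\<close> by (auto dest: inj_onD)
  qed
  then show False using A(2) finite_subset by auto
qed

lemma Well_order_finite_has_max:
  assumes "Well_order R" "finite F" "F \<noteq> {}" "F \<subseteq> Field R"
  shows "\<exists>a\<in>F. \<forall>b\<in>F. (b, a) \<in> R"
  using assms(2-4)
proof (induction F rule: finite_ne_induct)
  case (singleton b)
  then show ?case
    using assms(1) by (simp add: well_order_on_def linear_order_on_def partial_order_on_def
        preorder_on_def refl_on_def)
next
  case (insert b F)
  interpret wo_rel R using assms(1) by (simp add: wo_rel_def)
  obtain a where a: "a \<in> F" "\<forall>c\<in>F. (c, a) \<in> R" using insert by auto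
  have "a \<in> Field R" "b \<in> Field R" using a insert.prems by auto
  then have max: "max2 a b \<in> insert b F" "(a, max2 a b) \<in> R" "(b, max2 a b) \<in> R"
    using max2_greater_among[of a b] a by auto
  have "(c, max2 a b) \<in> R" if "c \<in> F" for c
    using transD[OF TRANS _ max(2)] a that by blast
  with max(1,3) show ?case by blast
qed

definition max_index :: "'a rel \<Rightarrow> nat \<Rightarrow> (nat \<Rightarrow> 'a) \<Rightarrow> nat" where
  "max_index R n x = (LEAST i. i \<le> n \<and> (\<forall>j\<le>n. (x j, x i) \<in> R))"

lemma max_index:
  assumes "Well_order R" "\<forall>j\<le>n. x j \<in> Field R"
  shows "max_index R n x \<le> n" "j \<le> n \<Longrightarrow> (x j, x (max_index R n x)) \<in> R"
proof -
  obtain a where "a \<in> x ` {..n}" "\<forall>b\<in>x ` {..n}. (b, a) \<in> R"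
    using Well_order_finite_has_max[OF assms(1), of "x ` {..n}"] assms(2) by auto
  then have "\<exists>i. i \<le> n \<and> (\<forall>j\<le>n. (x j, x i) \<in> R)" by auto
  from LeastI_ex[OF this]
  show "max_index R n x \<le> n" "j \<le> n \<Longrightarrow> (x j, x (max_index R n x)) \<in> R"
    unfolding max_index_def by auto
qed

definition skip_index :: "nat \<Rightarrow> nat \<Rightarrow> nat" where
  "skip_index m j = (if j < m then j else Suc j)"

definition delete_coord :: "nat \<Rightarrow> (nat \<Rightarrow> 'a) \<Rightarrow> nat \<Rightarrow> 'a" where
  "delete_coord m x = x \<circ> skip_index m"

definition insert_coord :: "nat \<Rightarrow> 'a \<Rightarrow> (nat \<Rightarrow> 'a) \<Rightarrow> nat \<Rightarrow> 'a" where
  "insert_coord m a y j = (if j < m then y j else if j = m then a else y (j - 1))"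

lemma delete_insert_coord [simp]: "delete_coord m (insert_coord m a y) = y"
  by (rule ext) (simp add: delete_coord_def insert_coord_def skip_index_def)

lemma insert_coord_same [simp]: "insert_coord m a y m = a"
  by (simp add: insert_coord_def)

lemma insert_coord_PiE:
  assumes y: "y \<in> Pi\<^sub>E {..<n} (A \<circ> skip_index m)" and "a \<in> A m" "m \<le> n"
  shows "insert_coord m a y \<in> Pi\<^sub>E {..<Suc n} A"
proof (rule PiE_I)
  fix j assume j: "j \<in> {..<Suc n}"
  consider "j < m" | "j = m" | "m < j" by linarith
  then show "insert_coord m a y j \<in> A j"
  proof cases
    case 1
    then show ?thesis
      using PiE_mem[OF y, of j] \<open>m \<le> n\<close> by (simp add: insert_coord_def skip_index_def)
  next
    case 2
    then show ?thesis using \<open>a \<in> A m\<close> by simp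
  next
    case 3
    then obtain i where i: "j = Suc i" "m \<le> i" by (metis less_imp_Suc_add le_add1)
    then have "i < n" using j by simp
    then show ?thesis using PiE_mem[OF y, of i] i by (simp add: insert_coord_def skip_index_def)
  qed
next
  fix j assume "j \<notin> {..<Suc n}"
  then have "\<not> j < m" "j \<noteq> m" "j - 1 \<notin> {..<n}" using \<open>m \<le> n\<close> by auto
  then show "insert_coord m a y j = undefined"
    using PiE_arb[OF y] by (simp add: insert_coord_def)
qed

lemma PiE_lessThan_Suc_mem_subset:
  assumes "x \<in> Pi\<^sub>E {..<Suc n} A" "\<forall>i\<le>n. A i \<subseteq> S"
  shows "\<forall>j\<le>n. x j \<in> S"
proof (intro allI impI)
  fix j assume "j \<le> n"
  then show "x j \<in> S" using PiE_mem[OF assms(1), of j] assms(2) by auto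
qed

lemma below_max_of_constant_max_index:
  assumes R: "Well_order R" and A: "\<forall>i\<le>n. A i \<subseteq> Field R"
    and x0: "x0 \<in> Pi\<^sub>E {..<Suc n} A"
    and m: "\<forall>x\<in>Pi\<^sub>E {..<Suc n} A. max_index R n x = m"
    and a: "a \<in> A m" and i: "i \<le> n" "i \<noteq> m" and b: "b \<in> A i"
  shows "(b, a) \<in> R"
proof -
  note dom = PiE_lessThan_Suc_mem_subset[OF _ A]
  have "m \<le> n" using max_index(1)[OF R dom[OF x0]] m x0 by simp
  then have "insert i (insert m {..<Suc n}) = {..<Suc n}" using i by auto
  then have x: "x0(m := a, i := b) \<in> Pi\<^sub>E {..<Suc n} A"
    using PiE_fun_upd[OF b PiE_fun_upd[OF a x0]] by simp
  have "((x0(m := a, i := b)) i, (x0(m := a, i := b)) m) \<in> R"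
    using max_index(2)[OF R dom[OF x] i(1)] unfolding m[rule_format, OF x] .
  then show ?thesis using i(2) by simp
qed

definition max_colouring ::
    "'a rel \<Rightarrow> nat \<Rightarrow> ('a \<Rightarrow> (nat \<Rightarrow> 'a) \<Rightarrow> nat) \<Rightarrow> (nat \<Rightarrow> 'a) \<Rightarrow> nat" where
  "max_colouring R n g x =
     (let m = max_index R n x in prod_encode (m, g (x m) (delete_coord m x)))"

lemma not_homogeneous_box_max_colouring:
  assumes R: "Well_order R" "Field R = X"
    and g: "\<forall>a\<in>X. \<not> homogeneous_box n (underS R a) (g a)"
  shows "\<not> homogeneous_box (Suc n) X (max_colouring R n g)"
proof
  assume "homogeneous_box (Suc n) X (max_colouring R n g)"
  then obtain A c where A: "\<forall>i<Suc n. A i \<subseteq> X \<and> infinite (A i)"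
    and c: "\<forall>x\<in>Pi\<^sub>E {..<Suc n} A. max_colouring R n g x = c"
    unfolding homogeneous_box_def by blast
  have A_Field: "\<forall>i\<le>n. A i \<subseteq> Field R" using A R(2) by auto
  have "Pi\<^sub>E {..<Suc n} A \<noteq> {}"
    using A by (auto simp: PiE_eq_empty_iff)
  then obtain x0 where x0: "x0 \<in> Pi\<^sub>E {..<Suc n} A" by blast
  define m where "m = fst (prod_decode c)"
  have m: "max_index R n x = m" if "x \<in> Pi\<^sub>E {..<Suc n} A" for x
  proof -
    have "c = max_colouring R n g x" using c that by simp
    then show ?thesis by (simp add: m_def max_colouring_def Let_def)
  qed
  have "m \<le> n"
    using max_index(1)[OF R(1) PiE_lessThan_Suc_mem_subset[OF x0 A_Field]] m[OF x0] by simp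
  obtain a where a: "a \<in> A m"
    using A \<open>m \<le> n\<close> by (metis ex_in_conv finite.emptyI le_imp_less_Suc)
  define B where "B j = A (skip_index m j) - {a}" for j
  have "\<forall>j<n. B j \<subseteq> underS R a \<and> infinite (B j)"
  proof (intro allI impI conjI)
    fix j assume "j < n"
    then have j: "skip_index m j \<le> n" "skip_index m j \<noteq> m"
      by (auto simp: skip_index_def)
    have "(b, a) \<in> R" if "b \<in> A (skip_index m j)" for b
      using below_max_of_constant_max_index[OF R(1) A_Field x0 _ a j that] m by blast
    then show "B j \<subseteq> underS R a" by (auto simp: B_def underS_def)
    show "infinite (B j)" using A j by (simp add: B_def)
  qed
  moreover have "g a y = snd (prod_decode c)" if "y \<in> Pi\<^sub>E {..<n} B" for y
  proof -
    have "y \<in> Pi\<^sub>E {..<n} (A \<circ> skip_index m)"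
      using PiE_mono[of "{..<n}" B "A \<circ> skip_index m"] that by (force simp: B_def)
    then have x: "insert_coord m a y \<in> Pi\<^sub>E {..<Suc n} A"
      using a \<open>m \<le> n\<close> by (rule insert_coord_PiE)
    have "c = max_colouring R n g (insert_coord m a y)" using c x by simp
    then show ?thesis using m[OF x] by (simp add: max_colouring_def)
  qed
  ultimately have "homogeneous_box n (underS R a) (g a)"
    unfolding homogeneous_box_def by (intro exI[of _ B]) blast
  moreover have "a \<in> X" using A_Field R(2) a \<open>m \<le> n\<close> by blast
  ultimately show False using g by blast
qed

lemma card_le_aleph_not_homogeneous_box:
  "card_le_aleph k X \<Longrightarrow> \<exists>f. \<not> homogeneous_box (Suc k) X f"
proof (induction k arbitrary: X)
  case 0
  then show ?case using countable_not_homogeneous_box by auto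
next
  case (Suc k)
  then obtain R where R: "Well_order R" "Field R = X" "\<forall>a\<in>X. card_le_aleph k (underS R a)"
    by auto
  then have "\<forall>a\<in>X. \<exists>h. \<not> homogeneous_box (Suc k) (underS R a) h"
    using Suc.IH by blast
  then obtain g where "\<forall>a\<in>X. \<not> homogeneous_box (Suc k) (underS R a) (g a)"
    by (metis bchoice)
  then show ?case using not_homogeneous_box_max_colouring[OF R(1,2)] by blast
qed

theorem corollary5p3:
  fixes n :: nat and X :: "'a set"
  assumes "1 \<le> n" and "Theta_prop n X"
  shows "\<not> card_lt_aleph n X"
proof
  assume "card_lt_aleph n X"
  moreover obtain k where "n = Suc k" using assms(1) by (cases n) auto
  ultimately obtain f where "\<not> homogeneous_box n X f"
    using card_le_aleph_not_homogeneous_box by auto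
  then show False using assms(2) by (simp add: Theta_prop_iff_homogeneous_box)
qed

end
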